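(* Let $B$ be a minimum-weight basis of the weighted uncertainty matroid $\mathcal{M}=(E,\mathcal{I},A,w)$ and let $Q$ be a certificate that verifies $B$. Let $e\notin B$ and $e'\in B$ with $L_e=L_{e'}=w_e=w_{e'}$ be such that $e'\in C_e$, where $C_e$ is the fundamental circuit of $e$ with respect to $B$. Then $Q'=(Q\setminus\{e'\})\cup\{e\}$ is a certificate that verifies $B'=(B\cup\{e\})\setminus\{e'\}$.
   Context: A weighted uncertainty matroid $\mathcal{M}=(E,\mathcal{I},A,w)$ consists of a matroid $M=(E,\mathcal{I})$ on a finite set $E$, for each $e\in E$ a non-empty finite union $A_e$ of bounded real intervals (each open or closed), and a weight $w_e\in A_e$. Let $L_e=\inf A_e$, $U_e=\sup A_e$. A minimum-weight basis is a basis of $M$ minimizing the sum of weights. A weight assignment is $w^*:E\to\mathbb{R}$ with $w^*_e\in A_e$, consistent with $Q$ if $w^*_e=w_e$ for $e\in Q$. $Q$ verifies a basis $B$ (is a certificate for $B$) if for every weight assignment consistent with $Q$, $B$ is a minimum-weight basis with respect to it. For a basis $B$ and $f\notin B$, the fundamental circuit of $f$ is the unique circuit contained in $B\cup\{f\}$. *)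

theory Defs
  imports Complex_Main
begin

definition matroid :: "'a set \<Rightarrow> ('a set \<Rightarrow> bool) \<Rightarrow> bool" where
  "matroid E indep \<longleftrightarrow>
     finite E \<and>
     indep {} \<and>
     (\<forall>X. indep X \<longrightarrow> X \<subseteq> E) \<and>
     (\<forall>X Y. indep X \<and> Y \<subseteq> X \<longrightarrow> indep Y) \<and>
     (\<forall>X Y. indep X \<and> indep Y \<and> card X < card Y \<longrightarrow> (\<exists>y\<in>Y - X. indep (insert y X)))"

definition basis :: "'a set \<Rightarrow> ('a set \<Rightarrow> bool) \<Rightarrow> 'a set \<Rightarrow> bool" where
  "basis E indep B \<longleftrightarrow> B \<subseteq> E \<and> indep B \<and> (\<forall>X. X \<subseteq> E \<and> indep X \<and> B \<subseteq> X \<longrightarrow> X = B)"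

definition circuit :: "'a set \<Rightarrow> ('a set \<Rightarrow> bool) \<Rightarrow> 'a set \<Rightarrow> bool" where
  "circuit E indep C \<longleftrightarrow> C \<subseteq> E \<and> \<not> indep C \<and> (\<forall>X. X \<subset> C \<longrightarrow> indep X)"

definition fund_circuit :: "'a set \<Rightarrow> ('a set \<Rightarrow> bool) \<Rightarrow> 'a set \<Rightarrow> 'a \<Rightarrow> 'a set" where
  "fund_circuit E indep B f = (THE C. circuit E indep C \<and> C \<subseteq> insert f B)"

definition oc_interval :: "real set \<Rightarrow> bool" where
  "oc_interval I \<longleftrightarrow> (\<exists>a b. a \<le> b \<and> (I = {a..b} \<or> I = {a<..<b}))"

definition uncertainty_area :: "real set \<Rightarrow> bool" where
  "uncertainty_area S \<longleftrightarrow> S \<noteq> {} \<and> (\<exists>\<I>. finite \<I> \<and> (\<forall>I\<in>\<I>. oc_interval I) \<and> S = \<Union>\<I>)"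

definition weighted_uncertainty_matroid ::
  "'a set \<Rightarrow> ('a set \<Rightarrow> bool) \<Rightarrow> ('a \<Rightarrow> real set) \<Rightarrow> ('a \<Rightarrow> real) \<Rightarrow> bool" where
  "weighted_uncertainty_matroid E indep A w \<longleftrightarrow>
     matroid E indep \<and> (\<forall>e\<in>E. uncertainty_area (A e) \<and> w e \<in> A e)"

definition lower :: "('a \<Rightarrow> real set) \<Rightarrow> 'a \<Rightarrow> real" where
  "lower A e = Inf (A e)"

definition upper :: "('a \<Rightarrow> real set) \<Rightarrow> 'a \<Rightarrow> real" where
  "upper A e = Sup (A e)"

definition min_weight_basis :: "'a set \<Rightarrow> ('a set \<Rightarrow> bool) \<Rightarrow> ('a \<Rightarrow> real) \<Rightarrow> 'a set \<Rightarrow> bool" where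
  "min_weight_basis E indep w B \<longleftrightarrow>
     basis E indep B \<and> (\<forall>B'. basis E indep B' \<longrightarrow> sum w B \<le> sum w B')"

definition consistent_assignment ::
  "'a set \<Rightarrow> ('a \<Rightarrow> real set) \<Rightarrow> ('a \<Rightarrow> real) \<Rightarrow> 'a set \<Rightarrow> ('a \<Rightarrow> real) \<Rightarrow> bool" where
  "consistent_assignment E A w Q w' \<longleftrightarrow> (\<forall>e\<in>E. w' e \<in> A e) \<and> (\<forall>e\<in>Q \<inter> E. w' e = w e)"

definition verifies ::
  "'a set \<Rightarrow> ('a set \<Rightarrow> bool) \<Rightarrow> ('a \<Rightarrow> real set) \<Rightarrow> ('a \<Rightarrow> real) \<Rightarrow> 'a set \<Rightarrow> 'a set \<Rightarrow> bool" where
  "verifies E indep A w Q B \<longleftrightarrow>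
     (\<forall>w'. consistent_assignment E A w Q w' \<longrightarrow> min_weight_basis E indep w' B)"

end

theory Submission
  imports Defs
begin

(* Exchanging e' for e along the fundamental circuit of e turns B into a basis B'. Given weights ws
   consistent with Q', resetting the weight of e' to w e' gives weights v consistent with Q, so B is
   a minimum-weight basis for v. Since w e' is the lower limit of e', v is pointwise below ws, and
   since ws e = w e = w e', the bases B' under ws and B under v have the same weight. Hence
   ws(B') = v(B) <= v(B'') <= ws(B'') for every basis B''. *)

lemma matroid_finite: "matroid E indep \<Longrightarrow> finite E"
  unfolding matroid_def by blast

lemma matroid_indep_subset_ground: "matroid E indep \<Longrightarrow> indep X \<Longrightarrow> X \<subseteq> E"
  unfolding matroid_def by blast

lemma matroid_indep_subset: "matroid E indep \<Longrightarrow> indep X \<Longrightarrow> Y \<subseteq> X \<Longrightarrow> indep Y"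
  unfolding matroid_def by blast

lemma matroid_augment:
  "matroid E indep \<Longrightarrow> indep X \<Longrightarrow> indep Y \<Longrightarrow> card X < card Y \<Longrightarrow> \<exists>y\<in>Y - X. indep (insert y X)"
  unfolding matroid_def by blast

lemma matroid_indep_finite: "matroid E indep \<Longrightarrow> indep X \<Longrightarrow> finite X"
  using matroid_finite matroid_indep_subset_ground finite_subset by metis

lemma dependent_contains_circuit:
  assumes m: "matroid E indep" and "D \<subseteq> E" and "\<not> indep D"
  shows "\<exists>C\<subseteq>D. circuit E indep C"
proof -
  have "finite D" using assms(2) matroid_finite[OF m] finite_subset by blast
  then show ?thesis using assms(2,3)
  proof (induction D rule: finite_psubset_induct)
    case (psubset D)
    show ?case
    proof (cases "\<forall>X. X \<subset> D \<longrightarrow> indep X")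
      case True
      then have "circuit E indep D" using psubset.prems unfolding circuit_def by blast
      then show ?thesis by blast
    next
      case False
      then obtain X where "X \<subset> D" "\<not> indep X" by blast
      with psubset.IH psubset.prems(1) show ?thesis by (meson dual_order.trans less_imp_le)
    qed
  qed
qed

lemma indep_extend_within:
  assumes m: "matroid E indep" and "indep X" "X \<subseteq> S" and "indep Y" "Y \<subseteq> S"
  shows "\<exists>M. X \<subseteq> M \<and> M \<subseteq> S \<and> indep M \<and> card Y \<le> card M"
  using assms(2,3)
proof (induction "card Y - card X" arbitrary: X rule: less_induct)
  case less
  show ?case
  proof (cases "card Y \<le> card X")
    case True
    then show ?thesis using less.prems by blast
  next
    case False
    then obtain y where y: "y \<in> Y - X" "indep (insert y X)"
      using matroid_augment[OF m less.prems(1) \<open>indep Y\<close>] by auto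
    have "card (insert y X) = Suc (card X)"
      using y(1) matroid_indep_finite[OF m less.prems(1)] by simp
    then have "card Y - card (insert y X) < card Y - card X" using False by simp
    moreover have "insert y X \<subseteq> S" using y(1) less.prems(2) \<open>Y \<subseteq> S\<close> by blast
    ultimately show ?thesis using less.hyps[OF _ y(2)] by blast
  qed
qed

lemma basis_card_ge_indep:
  assumes m: "matroid E indep" and b: "basis E indep B" and "indep X"
  shows "card X \<le> card B"
proof (rule ccontr)
  assume "\<not> card X \<le> card B"
  moreover have "indep B" using b unfolding basis_def by blast
  ultimately obtain y where y: "y \<in> X - B" "indep (insert y B)"
    using matroid_augment[OF m _ \<open>indep X\<close>] by force
  have "insert y B \<subseteq> E" using matroid_indep_subset_ground[OF m y(2)] .
  then have "insert y B = B" using b y(2) unfolding basis_def by blast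
  then show False using y(1) by blast
qed

lemma indep_card_eq_basis:
  assumes m: "matroid E indep" and b: "basis E indep B" and "indep X" "card X = card B"
  shows "basis E indep X"
  unfolding basis_def
proof (intro conjI allI impI)
  show "X \<subseteq> E" using matroid_indep_subset_ground[OF m \<open>indep X\<close>] .
  fix Y assume Y: "Y \<subseteq> E \<and> indep Y \<and> X \<subseteq> Y"
  then have "finite Y" "card Y \<le> card X"
    using matroid_indep_finite[OF m] basis_card_ge_indep[OF m b] assms(4) by auto
  then show "Y = X" using card_seteq Y by blast
qed (rule \<open>indep X\<close>)

lemma circuit_in_insert_basis_unique:
  assumes m: "matroid E indep" and b: "basis E indep B" and "e \<notin> B"
    and c1: "circuit E indep C1" "C1 \<subseteq> insert e B"
    and c2: "circuit E indep C2" "C2 \<subseteq> insert e B"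
  shows "C1 = C2"
proof (rule ccontr)
  assume "C1 \<noteq> C2"
  have indB: "indep B" using b unfolding basis_def by blast
  have "e \<in> C2"
    using c2 matroid_indep_subset[OF m indB, of C2] unfolding circuit_def by blast
  have "\<not> C1 \<subset> C2" using c1 c2 unfolding circuit_def by blast
  then obtain x where x: "x \<in> C1" "x \<notin> C2" using \<open>C1 \<noteq> C2\<close> by blast
  with \<open>e \<in> C2\<close> c1(2) have "x \<in> B" by blast
  have "indep (C1 - {x})" using c1(1) x(1) unfolding circuit_def by blast
  then obtain M where M: "C1 - {x} \<subseteq> M" "M \<subseteq> insert e B" "indep M" "card B \<le> card M"
    using indep_extend_within[OF m _ _ indB, of "C1 - {x}" "insert e B"] c1(2) by blast
  have "x \<notin> M"
    using M(1,3) c1(1) matroid_indep_subset[OF m M(3), of C1] unfolding circuit_def by blast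
  then have sub: "M \<subseteq> insert e B - {x}" using M(2) by blast
  have fin: "finite (insert e B - {x})" using matroid_indep_finite[OF m indB] by simp
  have "card (insert e B - {x}) = card B"
    using \<open>x \<in> B\<close> \<open>e \<notin> B\<close> matroid_indep_finite[OF m indB] by (simp add: card_insert_if)
  then have "M = insert e B - {x}" using card_seteq[OF fin sub] M(4) by simp
  then have "C2 \<subseteq> M" using c2(2) x(2) by blast
  then show False using c2(1) matroid_indep_subset[OF m M(3)] unfolding circuit_def by blast
qed

lemma fund_circuit_eqI:
  assumes "matroid E indep" "basis E indep B" "e \<notin> B" "circuit E indep C" "C \<subseteq> insert e B"
  shows "fund_circuit E indep B e = C"
  unfolding fund_circuit_def
  using assms circuit_in_insert_basis_unique[OF assms(1-3)] by (intro the_equality) blast+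

lemma basis_exchange_fund_circuit:
  assumes m: "matroid E indep" and b: "basis E indep B"
    and "e \<in> E" "e \<notin> B" "e' \<in> B" and e': "e' \<in> fund_circuit E indep B e"
  shows "basis E indep (insert e (B - {e'}))"
proof (rule indep_card_eq_basis[OF m b])
  show "indep (insert e (B - {e'}))"
  proof (rule ccontr)
    assume "\<not> indep (insert e (B - {e'}))"
    moreover have "insert e (B - {e'}) \<subseteq> E" using b \<open>e \<in> E\<close> unfolding basis_def by blast
    ultimately obtain C where C: "C \<subseteq> insert e (B - {e'})" "circuit E indep C"
      using dependent_contains_circuit[OF m] by blast
    then have "fund_circuit E indep B e = C"
      using fund_circuit_eqI[OF m b \<open>e \<notin> B\<close>] by blast
    then show False using e' C(1) \<open>e' \<in> B\<close> \<open>e \<notin> B\<close> by blast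
  qed
  have "finite B" using b matroid_indep_finite[OF m] unfolding basis_def by blast
  then show "card (insert e (B - {e'})) = card B"
    using \<open>e \<notin> B\<close> \<open>e' \<in> B\<close> by (metis card_Suc_Diff1 card_insert_disjoint finite_Diff Diff_iff)
qed

lemma uncertainty_area_bdd_below:
  assumes "uncertainty_area S"
  shows "bdd_below S"
proof -
  obtain \<I> where "finite \<I>" "\<forall>I\<in>\<I>. oc_interval I" "S = \<Union>\<I>"
    using assms unfolding uncertainty_area_def by blast
  moreover have "bdd_below I" if "oc_interval I" for I
    using that unfolding oc_interval_def by auto
  ultimately show ?thesis using bdd_below_UN[of \<I> "\<lambda>I. I"] by simp
qed

lemma lower_le: "uncertainty_area (A e) \<Longrightarrow> x \<in> A e \<Longrightarrow> lower A e \<le> x"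
  unfolding lower_def by (simp add: cInf_lower uncertainty_area_bdd_below)

lemma consistent_assignment_fun_upd:
  assumes "consistent_assignment E A w Q' w'" "Q - {x} \<subseteq> Q'" "w x \<in> A x"
  shows "consistent_assignment E A w Q (w'(x := w x))"
  using assms unfolding consistent_assignment_def by auto

lemma min_weight_basis_mono:
  assumes "min_weight_basis E indep v B" "\<And>x. x \<in> E \<Longrightarrow> v x \<le> v' x"
    and "basis E indep B'" "sum v' B' \<le> sum v B"
  shows "min_weight_basis E indep v' B'"
  unfolding min_weight_basis_def
proof (intro conjI allI impI)
  fix B'' assume b'': "basis E indep B''"
  have "sum v' B' \<le> sum v B" by fact
  also have "\<dots> \<le> sum v B''" using assms(1) b'' unfolding min_weight_basis_def by blast
  also have "\<dots> \<le> sum v' B''" using b'' assms(2) unfolding basis_def by (intro sum_mono) blast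
  finally show "sum v' B' \<le> sum v' B''" .
qed fact

theorem lemma11:
  fixes E :: "'a set" and indep :: "'a set \<Rightarrow> bool"
    and A :: "'a \<Rightarrow> real set" and w :: "'a \<Rightarrow> real"
    and B Q :: "'a set" and e e' :: 'a
  assumes "weighted_uncertainty_matroid E indep A w"
    and "min_weight_basis E indep w B"
    and "verifies E indep A w Q B"
    and "e \<in> E" and "e \<notin> B" and "e' \<in> B"
    and "lower A e = lower A e'" and "lower A e' = w e" and "w e = w e'"
    and "e' \<in> fund_circuit E indep B e"
  shows "verifies E indep A w ((Q - {e'}) \<union> {e}) ((B \<union> {e}) - {e'})"
proof -
  have m: "matroid E indep" and area: "\<And>x. x \<in> E \<Longrightarrow> uncertainty_area (A x) \<and> w x \<in> A x"
    using assms(1) unfolding weighted_uncertainty_matroid_def by blast+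
  have b: "basis E indep B" using assms(2) unfolding min_weight_basis_def by blast
  have "e' \<in> E" "finite B"
    using b assms(6) matroid_indep_finite[OF m] unfolding basis_def by blast+
  have B': "(B \<union> {e}) - {e'} = insert e (B - {e'})" using assms(5,6) by blast
  show ?thesis unfolding verifies_def B'
  proof (intro allI impI)
    fix ws assume ws: "consistent_assignment E A w ((Q - {e'}) \<union> {e}) ws"
    define v where "v = ws(e' := w e')"
    have "consistent_assignment E A w Q v"
      unfolding v_def by (rule consistent_assignment_fun_upd[OF ws]) (use area \<open>e' \<in> E\<close> in auto)
    then have "min_weight_basis E indep v B" using assms(3) unfolding verifies_def by blast
    moreover have "v x \<le> ws x" if "x \<in> E" for x
      using that ws lower_le[of A e' "ws e'"] area[OF \<open>e' \<in> E\<close>] assms(8,9)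
      unfolding v_def consistent_assignment_def by auto
    moreover have "ws e = w e" using ws assms(4) unfolding consistent_assignment_def by blast
    then have "sum ws (insert e (B - {e'})) = sum v B"
      using \<open>finite B\<close> assms(5,6,9) by (simp add: v_def sum.remove)
    ultimately show "min_weight_basis E indep ws (insert e (B - {e'}))"
      using min_weight_basis_mono basis_exchange_fund_circuit[OF m b assms(4,5,6,10)] by fastforce
  qed
qed

end
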